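(* For every $\varepsilon\in(0,1)$ there is a non-flat class A Lorentzian 2-torus $(\mathbb{T}^2,g)$ such that $(1-\varepsilon)\,\mathrm{Vol}(\mathbb{T}^2,g)\le\lambda\le\mathrm{Vol}(\mathbb{T}^2,g)$, where $\lambda$ is the volume of the set of all timelike poles of $(\mathbb{T}^2,g)$.
   Context: A point $p$ of a Lorentzian manifold is a timelike pole if no timelike geodesic starting at $p$ contains a pair of conjugate points. A Lorentzian 2-torus is class A if it is time-orientable, totally vicious (every point lies on a closed timelike curve) and its Abelian cover $(\mathbb{R}^2,g)$ (universal cover with the lifted metric) is globally hyperbolic. Volume is the Riemannian-type volume measure induced by $g$. *)

theory Defs
  imports "HOL-Analysis.Analysis"
begin

text \<open>The torus T^2 is realised as R^2 / Z^2; every object on T^2 is described by its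
 Z^2-periodic lift to the Abelian (= universal) cover R^2 = real \<times> real.\<close>

type_synonym pt = "real \<times> real"
type_synonym metric = "pt \<Rightarrow> nat \<Rightarrow> nat \<Rightarrow> real"

definition comp :: "nat \<Rightarrow> pt \<Rightarrow> real" where
  "comp k v = (if k = 0 then fst v else snd v)"

text \<open>C-infinity smoothness of a real function on R^2 (coinductively: differentiable
 everywhere with smooth partial derivatives).\<close>
coinductive smooth2 :: "(pt \<Rightarrow> real) \<Rightarrow> bool" where
  "\<lbrakk> \<forall>p. (f has_derivative (\<lambda>h. fx p * fst h + fy p * snd h)) (at p);
     smooth2 fx; smooth2 fy \<rbrakk> \<Longrightarrow> smooth2 f"

definition pd :: "nat \<Rightarrow> (pt \<Rightarrow> real) \<Rightarrow> pt \<Rightarrow> real" where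
  "pd k f p = (if k = 0 then deriv (\<lambda>s. f (s, snd p)) (fst p)
                         else deriv (\<lambda>s. f (fst p, s)) (snd p))"

definition Qf :: "metric \<Rightarrow> pt \<Rightarrow> pt \<Rightarrow> real" where
  "Qf g p v = (\<Sum>i<2. \<Sum>j<2. g p i j * comp i v * comp j v)"

definition Bf :: "metric \<Rightarrow> pt \<Rightarrow> pt \<Rightarrow> pt \<Rightarrow> real" where
  "Bf g p v w = (\<Sum>i<2. \<Sum>j<2. g p i j * comp i v * comp j w)"

definition gdet :: "metric \<Rightarrow> pt \<Rightarrow> real" where
  "gdet g p = g p 0 0 * g p 1 1 - g p 0 1 * g p 1 0"

text \<open>Smooth Lorentzian metric on T^2 (lifted to a Z^2-periodic metric on R^2).
 Convention: v is timelike iff Qf g p v < 0.\<close>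
definition torus_lorentz_metric :: "metric \<Rightarrow> bool" where
  "torus_lorentz_metric g \<longleftrightarrow>
     (\<forall>i<2. \<forall>j<2. smooth2 (\<lambda>p. g p i j)) \<and>
     (\<forall>p. g p 0 1 = g p 1 0 \<and> gdet g p < 0) \<and>
     (\<forall>p i j (m::int) (n::int). g (p + (of_int m, of_int n)) i j = g p i j)"

definition ginv :: "metric \<Rightarrow> pt \<Rightarrow> nat \<Rightarrow> nat \<Rightarrow> real" where
  "ginv g p i j =
     (if i = 0 \<and> j = 0 then g p 1 1 / gdet g p
      else if i = 1 \<and> j = 1 then g p 0 0 / gdet g p
      else if i = 0 then - g p 0 1 / gdet g p
      else - g p 1 0 / gdet g p)"

definition chr :: "metric \<Rightarrow> nat \<Rightarrow> nat \<Rightarrow> nat \<Rightarrow> pt \<Rightarrow> real" where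
  "chr g a b c p = (1/2) * (\<Sum>d<2. ginv g p a d *
      (pd b (\<lambda>q. g q d c) p + pd c (\<lambda>q. g q d b) p - pd d (\<lambda>q. g q b c) p))"

definition riem :: "metric \<Rightarrow> nat \<Rightarrow> nat \<Rightarrow> nat \<Rightarrow> nat \<Rightarrow> pt \<Rightarrow> real" where
  "riem g a b c d p = pd c (chr g a d b) p - pd d (chr g a c b) p
      + (\<Sum>e<2. chr g a c e p * chr g e d b p - chr g a d e p * chr g e c b p)"

definition flat :: "metric \<Rightarrow> bool" where
  "flat g \<longleftrightarrow> (\<forall>p a b c d. a < 2 \<longrightarrow> b < 2 \<longrightarrow> c < 2 \<longrightarrow> d < 2 \<longrightarrow> riem g a b c d p = 0)"

definition is_geodesic :: "metric \<Rightarrow> real \<Rightarrow> (real \<Rightarrow> pt) \<Rightarrow> (real \<Rightarrow> pt) \<Rightarrow> bool" where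
  "is_geodesic g T gam v \<longleftrightarrow> (\<exists>acc.
     (\<forall>t\<in>{0..T}. (gam has_vector_derivative v t) (at t within {0..T})) \<and>
     (\<forall>t\<in>{0..T}. (v has_vector_derivative acc t) (at t within {0..T})) \<and>
     (\<forall>t\<in>{0..T}. \<forall>a<2. comp a (acc t) +
         (\<Sum>b<2. \<Sum>c<2. chr g a b c (gam t) * comp b (v t) * comp c (v t)) = 0))"

text \<open>Jacobi field J along the geodesic (gam, v): the Jacobi equation written in
 coordinates (linearised geodesic equation).\<close>
definition is_jacobi :: "metric \<Rightarrow> real \<Rightarrow> (real \<Rightarrow> pt) \<Rightarrow> (real \<Rightarrow> pt) \<Rightarrow> (real \<Rightarrow> pt) \<Rightarrow> bool" where
  "is_jacobi g T gam v J \<longleftrightarrow> (\<exists>W A.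
     (\<forall>t\<in>{0..T}. (J has_vector_derivative W t) (at t within {0..T})) \<and>
     (\<forall>t\<in>{0..T}. (W has_vector_derivative A t) (at t within {0..T})) \<and>
     (\<forall>t\<in>{0..T}. \<forall>a<2. comp a (A t)
        + (\<Sum>b<2. \<Sum>c<2. \<Sum>d<2. pd d (chr g a b c) (gam t) * comp d (J t) * comp b (v t) * comp c (v t))
        + 2 * (\<Sum>b<2. \<Sum>c<2. chr g a b c (gam t) * comp b (v t) * comp c (W t)) = 0))"

definition conjugate_pair :: "metric \<Rightarrow> real \<Rightarrow> (real \<Rightarrow> pt) \<Rightarrow> (real \<Rightarrow> pt) \<Rightarrow> real \<Rightarrow> real \<Rightarrow> bool" where
  "conjugate_pair g T gam v s1 s2 \<longleftrightarrow> 0 \<le> s1 \<and> s1 < s2 \<and> s2 \<le> T \<and>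
     (\<exists>J. is_jacobi g T gam v J \<and> J s1 = 0 \<and> J s2 = 0 \<and> (\<exists>t\<in>{0..T}. J t \<noteq> 0))"

definition timelike_pole :: "metric \<Rightarrow> pt \<Rightarrow> bool" where
  "timelike_pole g p \<longleftrightarrow> \<not> (\<exists>T gam v s1 s2. is_geodesic g T gam v \<and> gam 0 = p \<and>
      Qf g p (v 0) < 0 \<and> conjugate_pair g T gam v s1 s2)"

definition time_orientation :: "metric \<Rightarrow> (pt \<Rightarrow> pt) \<Rightarrow> bool" where
  "time_orientation g X \<longleftrightarrow> continuous_on UNIV X \<and>
     (\<forall>p (m::int) (n::int). X (p + (of_int m, of_int n)) = X p) \<and>
     (\<forall>p. Qf g p (X p) < 0)"

text \<open>Totally vicious: through every point of T^2 passes a closed timelike curve,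
 i.e. in the lift a C^1 timelike curve from p to p + k, k in Z^2.\<close>
definition totally_vicious :: "metric \<Rightarrow> bool" where
  "totally_vicious g \<longleftrightarrow> (\<forall>p. \<exists>gam (m::int) (n::int).
      gam C1_differentiable_on {0..1} \<and>
      (\<forall>t\<in>{0..1}. Qf g (gam t) (vector_derivative gam (at t)) < 0) \<and>
      gam 0 = p \<and> gam 1 = p + (of_int m, of_int n))"

definition fd_causal_curve :: "metric \<Rightarrow> (pt \<Rightarrow> pt) \<Rightarrow> (real \<Rightarrow> pt) \<Rightarrow> bool" where
  "fd_causal_curve g X gam \<longleftrightarrow> continuous_on {0..1} gam \<and>
     (\<exists>S. finite S \<and> gam C1_differentiable_on ({0..1} - S) \<and>
        (\<forall>t\<in>{0..1} - S. vector_derivative gam (at t) \<noteq> 0 \<and>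
            Qf g (gam t) (vector_derivative gam (at t)) \<le> 0 \<and>
            Bf g (gam t) (vector_derivative gam (at t)) (X (gam t)) < 0))"

definition causal_future :: "metric \<Rightarrow> (pt \<Rightarrow> pt) \<Rightarrow> pt \<Rightarrow> pt set" where
  "causal_future g X p = {p} \<union> {q. \<exists>gam. fd_causal_curve g X gam \<and> gam 0 = p \<and> gam 1 = q}"

definition causal_past :: "metric \<Rightarrow> (pt \<Rightarrow> pt) \<Rightarrow> pt \<Rightarrow> pt set" where
  "causal_past g X p = {p} \<union> {q. \<exists>gam. fd_causal_curve g X gam \<and> gam 0 = q \<and> gam 1 = p}"

definition globally_hyperbolic :: "metric \<Rightarrow> (pt \<Rightarrow> pt) \<Rightarrow> bool" where
  "globally_hyperbolic g X \<longleftrightarrow>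
     \<not> (\<exists>gam. fd_causal_curve g X gam \<and> gam 0 = gam 1) \<and>
     (\<forall>p q. compact (causal_future g X p \<inter> causal_past g X q))"

definition class_A :: "metric \<Rightarrow> bool" where
  "class_A g \<longleftrightarrow> (\<exists>X. time_orientation g X \<and> totally_vicious g \<and> globally_hyperbolic g X)"

text \<open>Fundamental domain of the torus and the volume measure of g.\<close>
definition cell :: "pt set" where
  "cell = {0..<1} \<times> {0..<1}"

definition vol :: "metric \<Rightarrow> pt set \<Rightarrow> ennreal" where
  "vol g S = (\<integral>\<^sup>+ x. ennreal (sqrt \<bar>gdet g x\<bar>) * indicator S x \<partial>lebesgue)"

end

theory Submission
  imports Defs
begin

text \<open>Take on the cover \<open>\<real>\<^sup>2\<close> the conformally flat metric \<open>g = \<omega>(x) (-dx\<^sup>2 + dy\<^sup>2)\<close> with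
  \<open>\<omega>(x) = 2 + sin 2\<pi>x\<close>. It is \<open>\<int>\<^sup>2\<close>-periodic, and its curvature is \<open>(\<omega>'/2\<omega>)'\<close>, which does not
  vanish. Its light cones are those of the flat metric, so causal diamonds in the cover are compact
  rectangles and the horizontal circles are closed timelike curves: the torus is of class A.

  Every point is a timelike pole, so the poles have full volume. Along a timelike geodesic the energy
  \<open>\<omega>(x)(y'\<^sup>2 - x'\<^sup>2)\<close> is conserved, hence \<open>x' \<noteq> 0\<close>. For a Jacobi field J, \<open>g(J, \<gamma>')\<close> is affine in t
  and the variation \<open>c\<close> of the conserved momentum \<open>\<omega>(x) y'\<close> is constant. If J vanishes at two times,
  the first fact makes J orthogonal to \<open>\<gamma>'\<close>; then \<open>J\<^sup>y / (\<omega> x'\<^sup>2)\<close> has derivative \<open>c / (\<omega> x')\<^sup>2\<close>, so Rolle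
  gives \<open>c = 0\<close> and J vanishes identically.\<close>

lemma has_real_derivative_fst:
  "(f has_vector_derivative D) F \<Longrightarrow> ((\<lambda>t. fst (f t)) has_real_derivative fst D) F"
  using bounded_linear.has_vector_derivative[OF bounded_linear_fst]
  by (simp add: has_real_derivative_iff_has_vector_derivative)

lemma has_real_derivative_snd:
  "(f has_vector_derivative D) F \<Longrightarrow> ((\<lambda>t. snd (f t)) has_real_derivative snd D) F"
  using bounded_linear.has_vector_derivative[OF bounded_linear_snd]
  by (simp add: has_real_derivative_iff_has_vector_derivative)

lemma has_real_derivative_zero_imp_eq:
  fixes f :: "real \<Rightarrow> real"
  assumes "\<And>t. t \<in> {a..b} \<Longrightarrow> (f has_real_derivative 0) (at t within {a..b})"
    and "s \<in> {a..b}" "t \<in> {a..b}"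
  shows "f s = f t"
  using has_field_derivative_zero_constant[of "{a..b}" f] assms by fastforce

lemma nondecreasing_if_deriv_nonneg_except_finite:
  fixes f f' :: "real \<Rightarrow> real"
  assumes "finite S" "a \<le> b" "continuous_on {a..b} f"
    and "\<And>t. t \<in> {a..b} - S \<Longrightarrow> (f has_real_derivative f' t) (at t)"
    and "\<And>t. t \<in> {a..b} - S \<Longrightarrow> 0 \<le> f' t"
  shows "f a \<le> f b"
proof -
  have "((\<lambda>t. if t \<in> S then 0 else f' t) has_integral f b - f a) {a..b}"
    using assms
    by (intro fundamental_theorem_of_calculus_strong[OF \<open>finite S\<close>])
       (auto simp: has_real_derivative_iff_has_vector_derivative[symmetric])
  then show ?thesis
    using assms(5) by (fastforce dest: has_integral_nonneg)
qed

lemma segment_vector_derivative: "((\<lambda>t. p + t *\<^sub>R (d::pt)) has_vector_derivative d) (at t)"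
  by (auto intro!: derivative_eq_intros)

lemma segment_C1: "(\<lambda>t. p + t *\<^sub>R (d::pt)) C1_differentiable_on S"
  unfolding C1_differentiable_on_def
  by (rule exI[of _ "\<lambda>_. d"]) (auto intro: segment_vector_derivative)

lemma vector_derivative_segment: "vector_derivative (\<lambda>t. p + t *\<^sub>R (d::pt)) (at t) = d"
  by (rule vector_derivative_at[OF segment_vector_derivative])

lemma sum_lessThan_2: "(\<Sum>i<2. f i) = f 0 + f (1::nat)"
  by (simp add: numeral_2_eq_2)

lemma less_2_cases: "(a::nat) < 2 \<Longrightarrow> a = 0 \<or> a = 1"
  by auto

section \<open>Conformally flat metrics \<open>\<omega>(x) (-dx\<^sup>2 + dy\<^sup>2)\<close>\<close>

definition conformal_metric :: "(real \<Rightarrow> real) \<Rightarrow> metric" where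
  "conformal_metric \<omega> p i j =
     (if i = 0 \<and> j = 0 then - \<omega> (fst p) else if i = 1 \<and> j = 1 then \<omega> (fst p) else 0)"

lemma Qf_conformal_metric:
  "Qf (conformal_metric \<omega>) p u = \<omega> (fst p) * (snd u * snd u - fst u * fst u)"
  by (simp add: Qf_def sum_lessThan_2 conformal_metric_def comp_def algebra_simps)

lemma Bf_conformal_metric:
  "Bf (conformal_metric \<omega>) p u w = \<omega> (fst p) * (snd u * snd w - fst u * fst w)"
  by (simp add: Bf_def sum_lessThan_2 conformal_metric_def comp_def algebra_simps)

lemma gdet_conformal_metric: "gdet (conformal_metric \<omega>) p = - (\<omega> (fst p) * \<omega> (fst p))"
  by (simp add: gdet_def conformal_metric_def)

lemma pd_snd_conformal_metric: "k \<noteq> 0 \<Longrightarrow> pd k (\<lambda>q. conformal_metric \<omega> q i j) p = 0"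
  by (cases "i = 0 \<and> j = 0"; cases "i = 1 \<and> j = 1") (auto simp: pd_def conformal_metric_def)

locale conformal_factor =
  fixes \<omega> \<omega>' \<omega>'' :: "real \<Rightarrow> real"
  assumes pos: "0 < \<omega> s"
    and deriv1: "(\<omega> has_real_derivative \<omega>' s) (at s)"
    and deriv2: "(\<omega>' has_real_derivative \<omega>'' s) (at s)"
begin

definition christoffel :: "real \<Rightarrow> real" where
  "christoffel s = \<omega>' s / (2 * \<omega> s)"

definition christoffel' :: "real \<Rightarrow> real" where
  "christoffel' s = (\<omega>'' s * \<omega> s - \<omega>' s * \<omega>' s) / (2 * \<omega> s * \<omega> s)"

lemma christoffel_deriv: "(christoffel has_real_derivative christoffel' s) (at s)"
proof -
  have "((\<lambda>s. \<omega>' s / (2 * \<omega> s)) has_real_derivative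
     (\<omega>'' s * (2 * \<omega> s) - \<omega>' s * (2 * \<omega>' s)) / ((2 * \<omega> s) * (2 * \<omega> s))) (at s)"
    using pos[of s] by (auto intro!: derivative_eq_intros deriv1 deriv2)
  moreover have "(\<omega>'' s * (2 * \<omega> s) - \<omega>' s * (2 * \<omega>' s)) / ((2 * \<omega> s) * (2 * \<omega> s))
      = christoffel' s"
    using pos[of s] unfolding christoffel'_def by (simp add: field_simps)
  ultimately show ?thesis unfolding christoffel_def[abs_def] by simp
qed

lemma pd_fst_conformal_metric:
  "pd 0 (\<lambda>q. conformal_metric \<omega> q i j) p =
     (if i = 0 \<and> j = 0 then - \<omega>' (fst p) else if i = 1 \<and> j = 1 then \<omega>' (fst p) else 0)"
proof -
  have "deriv \<omega> s = \<omega>' s" "deriv (\<lambda>s. - \<omega> s) s = - \<omega>' s" for s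
    by (auto intro!: DERIV_imp_deriv derivative_eq_intros deriv1)
  then show ?thesis by (auto simp: pd_def conformal_metric_def cong: if_cong)
qed

lemma ginv_conformal_metric:
  "ginv (conformal_metric \<omega>) p i j =
     (if i = 0 \<and> j = 0 then - 1 / \<omega> (fst p) else if i = 1 \<and> j = 1 then 1 / \<omega> (fst p) else 0)"
  using pos[of "fst p"]
  by (auto simp: ginv_def gdet_conformal_metric conformal_metric_def)

lemma chr_conformal_metric:
  assumes "a < 2" "b < 2" "c < 2"
  shows "chr (conformal_metric \<omega>) a b c p = (if even (a + b + c) then christoffel (fst p) else 0)"
  using less_2_cases[OF assms(1)] less_2_cases[OF assms(2)] less_2_cases[OF assms(3)] pos[of "fst p"]
  by (auto simp: chr_def sum_lessThan_2 ginv_conformal_metric pd_fst_conformal_metric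
      pd_snd_conformal_metric christoffel_def field_simps)

lemma pd_chr_conformal_metric:
  assumes "a < 2" "b < 2" "c < 2"
  shows "pd k (chr (conformal_metric \<omega>) a b c) p =
           (if k = 0 \<and> even (a + b + c) then christoffel' (fst p) else 0)"
proof -
  have "chr (conformal_metric \<omega>) a b c = (\<lambda>q. if even (a + b + c) then christoffel (fst q) else 0)"
    using chr_conformal_metric[OF assms] by auto
  moreover have "deriv christoffel s = christoffel' s" for s
    by (rule DERIV_imp_deriv[OF christoffel_deriv])
  ultimately show ?thesis by (cases "even (a + b + c)") (auto simp: pd_def)
qed

lemma riem_conformal_metric: "riem (conformal_metric \<omega>) 0 1 0 1 p = christoffel' (fst p)"
  by (simp add: riem_def sum_lessThan_2 pd_chr_conformal_metric chr_conformal_metric)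

lemma not_flat_conformal_metric:
  assumes "christoffel' s \<noteq> 0"
  shows "\<not> flat (conformal_metric \<omega>)"
  using assms riem_conformal_metric[of "(s, 0)"] unfolding flat_def by force

lemma geodesic_equations:
  assumes "is_geodesic (conformal_metric \<omega>) T \<gamma> v"
  obtains a where
    "\<And>t. t \<in> {0..T} \<Longrightarrow> (\<gamma> has_vector_derivative v t) (at t within {0..T})"
    "\<And>t. t \<in> {0..T} \<Longrightarrow> (v has_vector_derivative a t) (at t within {0..T})"
    "\<And>t. t \<in> {0..T} \<Longrightarrow>
       fst (a t) = - christoffel (fst (\<gamma> t)) * (fst (v t) * fst (v t) + snd (v t) * snd (v t))"
    "\<And>t. t \<in> {0..T} \<Longrightarrow> snd (a t) = - 2 * christoffel (fst (\<gamma> t)) * fst (v t) * snd (v t)"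
proof -
  from assms obtain a where a:
    "\<forall>t\<in>{0..T}. (\<gamma> has_vector_derivative v t) (at t within {0..T})"
    "\<forall>t\<in>{0..T}. (v has_vector_derivative a t) (at t within {0..T})"
    "\<forall>t\<in>{0..T}. \<forall>i<2. comp i (a t) + (\<Sum>b<2. \<Sum>c<2.
        chr (conformal_metric \<omega>) i b c (\<gamma> t) * comp b (v t) * comp c (v t)) = 0"
    unfolding is_geodesic_def by blast
  show thesis
  proof (rule that[of a])
    fix t assume t: "t \<in> {0..T}"
    show "fst (a t) = - christoffel (fst (\<gamma> t)) * (fst (v t) * fst (v t) + snd (v t) * snd (v t))"
      using a(3)[rule_format, OF t, of 0]
      by (simp add: sum_lessThan_2 chr_conformal_metric comp_def algebra_simps)
    show "snd (a t) = - 2 * christoffel (fst (\<gamma> t)) * fst (v t) * snd (v t)"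
      using a(3)[rule_format, OF t, of 1]
      by (simp add: sum_lessThan_2 chr_conformal_metric comp_def algebra_simps)
  qed (use a in auto)
qed

lemma jacobi_equations:
  assumes "is_jacobi (conformal_metric \<omega>) T \<gamma> v J"
  obtains W A where
    "\<And>t. t \<in> {0..T} \<Longrightarrow> (J has_vector_derivative W t) (at t within {0..T})"
    "\<And>t. t \<in> {0..T} \<Longrightarrow> (W has_vector_derivative A t) (at t within {0..T})"
    "\<And>t. t \<in> {0..T} \<Longrightarrow> fst (A t) =
       - christoffel' (fst (\<gamma> t)) * fst (J t) * (fst (v t) * fst (v t) + snd (v t) * snd (v t))
       - 2 * christoffel (fst (\<gamma> t)) * (fst (v t) * fst (W t) + snd (v t) * snd (W t))"
    "\<And>t. t \<in> {0..T} \<Longrightarrow> snd (A t) =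
       - 2 * christoffel' (fst (\<gamma> t)) * fst (J t) * fst (v t) * snd (v t)
       - 2 * christoffel (fst (\<gamma> t)) * (fst (v t) * snd (W t) + snd (v t) * fst (W t))"
proof -
  from assms obtain W A where WA:
    "\<forall>t\<in>{0..T}. (J has_vector_derivative W t) (at t within {0..T})"
    "\<forall>t\<in>{0..T}. (W has_vector_derivative A t) (at t within {0..T})"
    "\<forall>t\<in>{0..T}. \<forall>i<2. comp i (A t)
        + (\<Sum>b<2. \<Sum>c<2. \<Sum>d<2. pd d (chr (conformal_metric \<omega>) i b c) (\<gamma> t)
             * comp d (J t) * comp b (v t) * comp c (v t))
        + 2 * (\<Sum>b<2. \<Sum>c<2. chr (conformal_metric \<omega>) i b c (\<gamma> t) * comp b (v t) * comp c (W t)) = 0"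
    unfolding is_jacobi_def by blast
  show thesis
  proof (rule that[of W A])
    fix t assume t: "t \<in> {0..T}"
    show "fst (A t) =
       - christoffel' (fst (\<gamma> t)) * fst (J t) * (fst (v t) * fst (v t) + snd (v t) * snd (v t))
       - 2 * christoffel (fst (\<gamma> t)) * (fst (v t) * fst (W t) + snd (v t) * snd (W t))"
      using WA(3)[rule_format, OF t, of 0]
      by (simp add: sum_lessThan_2 chr_conformal_metric pd_chr_conformal_metric comp_def algebra_simps)
    show "snd (A t) =
       - 2 * christoffel' (fst (\<gamma> t)) * fst (J t) * fst (v t) * snd (v t)
       - 2 * christoffel (fst (\<gamma> t)) * (fst (v t) * snd (W t) + snd (v t) * fst (W t))"
      using WA(3)[rule_format, OF t, of 1]
      by (simp add: sum_lessThan_2 chr_conformal_metric pd_chr_conformal_metric comp_def algebra_simps)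
  qed (use WA in auto)
qed

end

section \<open>Jacobi fields along timelike geodesics\<close>

text \<open>A Jacobi field \<open>(jx, jy)\<close> along a geodesic with x-coordinate \<open>x\<close> and velocity \<open>(vx, vy)\<close>, written out
  in coordinates; the y-coordinate of the geodesic does not occur since the metric does not depend on it.\<close>
locale conformal_jacobi_ode = conformal_factor +
  fixes T :: real and x vx vy ax ay jx jy wx wy Ax Ay :: "real \<Rightarrow> real"
  assumes T_nonneg: "0 \<le> T"
    and x_deriv: "\<And>t. t \<in> {0..T} \<Longrightarrow> (x has_real_derivative vx t) (at t within {0..T})"
    and vx_deriv: "\<And>t. t \<in> {0..T} \<Longrightarrow> (vx has_real_derivative ax t) (at t within {0..T})"
    and vy_deriv: "\<And>t. t \<in> {0..T} \<Longrightarrow> (vy has_real_derivative ay t) (at t within {0..T})"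
    and jx_deriv: "\<And>t. t \<in> {0..T} \<Longrightarrow> (jx has_real_derivative wx t) (at t within {0..T})"
    and jy_deriv: "\<And>t. t \<in> {0..T} \<Longrightarrow> (jy has_real_derivative wy t) (at t within {0..T})"
    and wx_deriv: "\<And>t. t \<in> {0..T} \<Longrightarrow> (wx has_real_derivative Ax t) (at t within {0..T})"
    and wy_deriv: "\<And>t. t \<in> {0..T} \<Longrightarrow> (wy has_real_derivative Ay t) (at t within {0..T})"
    and geodesic_x: "\<And>t. t \<in> {0..T} \<Longrightarrow>
      ax t = - christoffel (x t) * (vx t * vx t + vy t * vy t)"
    and geodesic_y: "\<And>t. t \<in> {0..T} \<Longrightarrow> ay t = - 2 * christoffel (x t) * vx t * vy t"
    and jacobi_x: "\<And>t. t \<in> {0..T} \<Longrightarrow> Ax t =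
      - christoffel' (x t) * jx t * (vx t * vx t + vy t * vy t)
      - 2 * christoffel (x t) * (vx t * wx t + vy t * wy t)"
    and jacobi_y: "\<And>t. t \<in> {0..T} \<Longrightarrow> Ay t =
      - 2 * christoffel' (x t) * jx t * vx t * vy t
      - 2 * christoffel (x t) * (vx t * wy t + vy t * wx t)"
    and timelike: "\<omega> (x 0) * (vy 0 * vy 0 - vx 0 * vx 0) < 0"
begin

lemma \<omega>_along_deriv:
  "t \<in> {0..T} \<Longrightarrow> ((\<lambda>t. \<omega> (x t)) has_real_derivative \<omega>' (x t) * vx t) (at t within {0..T})"
  using DERIV_chain2[OF deriv1 x_deriv] .

lemma \<omega>'_along_deriv:
  "t \<in> {0..T} \<Longrightarrow> ((\<lambda>t. \<omega>' (x t)) has_real_derivative \<omega>'' (x t) * vx t) (at t within {0..T})"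
  using DERIV_chain2[OF deriv2 x_deriv] .

lemma energy_conserved:
  assumes t: "t \<in> {0..T}"
  shows "\<omega> (x t) * (vy t * vy t - vx t * vx t) = \<omega> (x 0) * (vy 0 * vy 0 - vx 0 * vx 0)"
proof (rule has_real_derivative_zero_imp_eq[OF _ t])
  fix t assume t: "t \<in> {0..T}"
  have "((\<lambda>t. \<omega> (x t) * (vy t * vy t - vx t * vx t)) has_real_derivative
      \<omega>' (x t) * vx t * (vy t * vy t - vx t * vx t)
      + \<omega> (x t) * (ay t * vy t + vy t * ay t - (ax t * vx t + vx t * ax t))) (at t within {0..T})"
    by (rule derivative_eq_intros \<omega>_along_deriv[OF t] vx_deriv[OF t] vy_deriv[OF t] refl)+
       (simp add: algebra_simps)
  moreover have "\<omega>' (x t) * vx t * (vy t * vy t - vx t * vx t)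
      + \<omega> (x t) * (ay t * vy t + vy t * ay t - (ax t * vx t + vx t * ax t)) = 0"
    using pos[of "x t"]
    by (simp add: geodesic_x[OF t] geodesic_y[OF t] christoffel_def field_simps)
  ultimately show "((\<lambda>t. \<omega> (x t) * (vy t * vy t - vx t * vx t)) has_real_derivative 0)
      (at t within {0..T})" by simp
qed (use T_nonneg in simp)

lemma vx_nonzero:
  assumes t: "t \<in> {0..T}"
  shows "vx t \<noteq> 0"
proof
  assume "vx t = 0"
  then have "0 \<le> \<omega> (x t) * (vy t * vy t - vx t * vx t)"
    using pos[of "x t"] by simp
  with energy_conserved[OF t] timelike show False by simp
qed

text \<open>The pairing \<open>g(J, \<gamma>')\<close>; the Jacobi equation makes it affine in t.\<close>
definition tangential :: "real \<Rightarrow> real" where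
  "tangential t = \<omega> (x t) * (jy t * vy t - jx t * vx t)"

definition tangential_rate :: "real \<Rightarrow> real" where
  "tangential_rate t = 2 * \<omega> (x t) * (vy t * wy t - vx t * wx t)
     + \<omega>' (x t) * jx t * (vy t * vy t - vx t * vx t)"

lemma tangential_deriv:
  assumes t: "t \<in> {0..T}"
  shows "(tangential has_real_derivative tangential_rate t / 2) (at t within {0..T})"
proof -
  have "(tangential has_real_derivative \<omega>' (x t) * vx t * (jy t * vy t - jx t * vx t)
      + \<omega> (x t) * (wy t * vy t + jy t * ay t - (wx t * vx t + jx t * ax t))) (at t within {0..T})"
    unfolding tangential_def[abs_def]
    by (rule derivative_eq_intros \<omega>_along_deriv[OF t] vx_deriv[OF t] vy_deriv[OF t]
          jx_deriv[OF t] jy_deriv[OF t] refl)+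
       (simp add: algebra_simps)
  moreover have "\<omega>' (x t) * vx t * (jy t * vy t - jx t * vx t)
      + \<omega> (x t) * (wy t * vy t + jy t * ay t - (wx t * vx t + jx t * ax t)) = tangential_rate t / 2"
    using pos[of "x t"]
    by (simp add: tangential_rate_def geodesic_x[OF t] geodesic_y[OF t] christoffel_def field_simps)
  ultimately show ?thesis by simp
qed

lemma tangential_rate_constant:
  assumes t: "t \<in> {0..T}"
  shows "tangential_rate t = tangential_rate 0"
proof (rule has_real_derivative_zero_imp_eq[OF _ t])
  fix t assume t: "t \<in> {0..T}"
  have "(tangential_rate has_real_derivative 2 * (\<omega>' (x t) * vx t) * (vy t * wy t - vx t * wx t)
      + 2 * \<omega> (x t) * (ay t * wy t + vy t * Ay t - (ax t * wx t + vx t * Ax t))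
      + \<omega>'' (x t) * vx t * jx t * (vy t * vy t - vx t * vx t)
      + \<omega>' (x t) * wx t * (vy t * vy t - vx t * vx t)
      + \<omega>' (x t) * jx t * (2 * vy t * ay t - 2 * vx t * ax t)) (at t within {0..T})"
    unfolding tangential_rate_def[abs_def]
    by (rule derivative_eq_intros \<omega>_along_deriv[OF t] \<omega>'_along_deriv[OF t] vx_deriv[OF t]
          vy_deriv[OF t] jx_deriv[OF t] jy_deriv[OF t] wx_deriv[OF t] wy_deriv[OF t] refl)+
       (simp add: algebra_simps)
  moreover have "2 * (\<omega>' (x t) * vx t) * (vy t * wy t - vx t * wx t)
      + 2 * \<omega> (x t) * (ay t * wy t + vy t * Ay t - (ax t * wx t + vx t * Ax t))
      + \<omega>'' (x t) * vx t * jx t * (vy t * vy t - vx t * vx t)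
      + \<omega>' (x t) * wx t * (vy t * vy t - vx t * vx t)
      + \<omega>' (x t) * jx t * (2 * vy t * ay t - 2 * vx t * ax t) = 0"
    using pos[of "x t"]
    by (simp add: geodesic_x[OF t] geodesic_y[OF t] jacobi_x[OF t] jacobi_y[OF t]
        christoffel_def christoffel'_def field_simps)
  ultimately show "(tangential_rate has_real_derivative 0) (at t within {0..T})" by simp
qed (use T_nonneg in simp)

lemma tangential_affine:
  assumes t: "t \<in> {0..T}"
  shows "tangential t = tangential 0 + tangential_rate 0 / 2 * t"
proof -
  have "(\<lambda>t. tangential t - tangential_rate 0 / 2 * t) t = (\<lambda>t. tangential t - tangential_rate 0 / 2 * t) 0"
  proof (rule has_real_derivative_zero_imp_eq[OF _ t])
    fix t assume t: "t \<in> {0..T}"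
    have "((\<lambda>t. tangential t - tangential_rate 0 / 2 * t) has_real_derivative
        tangential_rate t / 2 - tangential_rate 0 / 2 * 1) (at t within {0..T})"
      by (rule derivative_eq_intros tangential_deriv[OF t] refl)+ simp
    then show "((\<lambda>t. tangential t - tangential_rate 0 / 2 * t) has_real_derivative 0) (at t within {0..T})"
      using tangential_rate_constant[OF t] by simp
  qed (use T_nonneg in simp)
  then show ?thesis by simp
qed

lemma tangential_vanishes:
  assumes s: "0 \<le> s1" "s1 < s2" "s2 \<le> T"
    and zeros: "jx s1 = 0" "jy s1 = 0" "jx s2 = 0" "jy s2 = 0"
    and t: "t \<in> {0..T}"
  shows "jx t * vx t = jy t * vy t"
proof -
  have "tangential s1 = 0" "tangential s2 = 0"
    using zeros by (simp_all add: tangential_def)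
  moreover have "tangential s1 = tangential 0 + tangential_rate 0 / 2 * s1"
    "tangential s2 = tangential 0 + tangential_rate 0 / 2 * s2"
    using s by (intro tangential_affine; simp)+
  ultimately have "tangential_rate 0 / 2 * s2 = tangential_rate 0 / 2 * s1"
    and tangential_0: "tangential 0 = - (tangential_rate 0 / 2 * s1)"
    by linarith+
  then have "tangential_rate 0 = 0"
    using s by simp
  with tangential_0 have "tangential 0 = 0" by simp
  then have "tangential t = 0" using tangential_affine[OF t] \<open>tangential_rate 0 = 0\<close> by simp
  then show ?thesis using pos[of "x t"] by (simp add: tangential_def)
qed

text \<open>The variation along J of the conserved momentum \<open>\<omega>(x) y'\<close> of the geodesic.\<close>
definition momentum_variation :: "real \<Rightarrow> real" where
  "momentum_variation t = \<omega> (x t) * wy t + \<omega>' (x t) * vy t * jx t"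

lemma momentum_variation_constant:
  assumes t: "t \<in> {0..T}"
  shows "momentum_variation t = momentum_variation 0"
proof (rule has_real_derivative_zero_imp_eq[OF _ t])
  fix t assume t: "t \<in> {0..T}"
  have "(momentum_variation has_real_derivative \<omega>' (x t) * vx t * wy t + \<omega> (x t) * Ay t
      + \<omega>'' (x t) * vx t * vy t * jx t + \<omega>' (x t) * ay t * jx t + \<omega>' (x t) * vy t * wx t)
      (at t within {0..T})"
    unfolding momentum_variation_def[abs_def]
    by (rule derivative_eq_intros \<omega>_along_deriv[OF t] \<omega>'_along_deriv[OF t] vy_deriv[OF t]
          jx_deriv[OF t] wy_deriv[OF t] refl)+
       (simp add: algebra_simps)
  moreover have "\<omega>' (x t) * vx t * wy t + \<omega> (x t) * Ay t
      + \<omega>'' (x t) * vx t * vy t * jx t + \<omega>' (x t) * ay t * jx t + \<omega>' (x t) * vy t * wx t = 0"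
    using pos[of "x t"]
    by (simp add: geodesic_y[OF t] jacobi_y[OF t] christoffel_def christoffel'_def field_simps)
  ultimately show "(momentum_variation has_real_derivative 0) (at t within {0..T})" by simp
qed (use T_nonneg in simp)

definition normal_ratio :: "real \<Rightarrow> real" where
  "normal_ratio t = jy t / (\<omega> (x t) * (vx t * vx t))"

lemma normal_ratio_deriv:
  assumes orth: "\<And>t. t \<in> {0..T} \<Longrightarrow> jx t * vx t = jy t * vy t"
    and t: "t \<in> {0..T}"
  shows "(normal_ratio has_real_derivative momentum_variation 0 / (\<omega> (x t) * vx t)\<^sup>2) (at t within {0..T})"
proof -
  have nz: "\<omega> (x t) * (vx t * vx t) \<noteq> 0"
    using pos[of "x t"] vx_nonzero[OF t] by simp
  have jx_eq: "jx t = jy t * vy t / vx t"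
    using orth[OF t] vx_nonzero[OF t] by (simp add: field_simps)
  have "(normal_ratio has_real_derivative (wy t * (\<omega> (x t) * (vx t * vx t))
      - jy t * (\<omega>' (x t) * vx t * (vx t * vx t) + \<omega> (x t) * (ax t * vx t + vx t * ax t)))
      / (\<omega> (x t) * (vx t * vx t) * (\<omega> (x t) * (vx t * vx t)))) (at t within {0..T})"
    unfolding normal_ratio_def[abs_def]
    by (rule derivative_eq_intros \<omega>_along_deriv[OF t] vx_deriv[OF t] jy_deriv[OF t] refl nz)+
       (simp add: algebra_simps)
  moreover have "(wy t * (\<omega> (x t) * (vx t * vx t))
      - jy t * (\<omega>' (x t) * vx t * (vx t * vx t) + \<omega> (x t) * (ax t * vx t + vx t * ax t)))
      / (\<omega> (x t) * (vx t * vx t) * (\<omega> (x t) * (vx t * vx t))) = momentum_variation t / (\<omega> (x t) * vx t)\<^sup>2"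
    unfolding momentum_variation_def jx_eq using pos[of "x t"] vx_nonzero[OF t]
    by (simp add: geodesic_x[OF t] christoffel_def field_simps power2_eq_square)
  ultimately show ?thesis using momentum_variation_constant[OF t] by simp
qed

theorem jacobi_field_vanishes:
  assumes s: "0 \<le> s1" "s1 < s2" "s2 \<le> T"
    and zeros: "jx s1 = 0" "jy s1 = 0" "jx s2 = 0" "jy s2 = 0"
    and t: "t \<in> {0..T}"
  shows "jx t = 0 \<and> jy t = 0"
proof -
  have ratio_deriv: "(normal_ratio has_real_derivative momentum_variation 0 / (\<omega> (x r) * vx r)\<^sup>2)
      (at r within {0..T})" if "r \<in> {0..T}" for r
    using normal_ratio_deriv[OF tangential_vanishes[OF s zeros] that] .
  have ratio_deriv_at: "(normal_ratio has_real_derivative momentum_variation 0 / (\<omega> (x r) * vx r)\<^sup>2) (at r)"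
    if "s1 < r" "r < s2" for r
  proof -
    have "r \<in> interior {0..T}" using that s by auto
    then show ?thesis
      using ratio_deriv[of r] at_within_interior[of r "{0..T}"] by (simp add: interior_subset[THEN subsetD])
  qed
  have "normal_ratio s1 = normal_ratio s2"
    using zeros by (simp add: normal_ratio_def)
  moreover have "continuous_on {s1..s2} normal_ratio"
    using DERIV_continuous_on[OF ratio_deriv] by (rule continuous_on_subset) (use s in auto)
  moreover have "normal_ratio differentiable (at r)" if "s1 < r" "r < s2" for r
    using ratio_deriv_at[OF that] real_differentiable_def by blast
  ultimately obtain r where r: "s1 < r" "r < s2" "(normal_ratio has_real_derivative 0) (at r)"
    using Rolle[OF s(2)] by blast
  then have "momentum_variation 0 / (\<omega> (x r) * vx r)\<^sup>2 = 0"
    using ratio_deriv_at DERIV_unique by blast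
  moreover have "r \<in> {0..T}" using r s by simp
  ultimately have "momentum_variation 0 = 0"
    using pos[of "x r"] vx_nonzero by simp
  then have "normal_ratio t = normal_ratio s1"
    using ratio_deriv s by (intro has_real_derivative_zero_imp_eq[OF _ t]) auto
  then have "jy t = 0"
    using zeros pos[of "x t"] vx_nonzero[OF t] by (simp add: normal_ratio_def)
  with tangential_vanishes[OF s zeros t] vx_nonzero[OF t] show ?thesis by simp
qed

end

context conformal_factor
begin

lemma jacobi_field_vanishes_conformal_metric:
  assumes geo: "is_geodesic (conformal_metric \<omega>) T \<gamma> v"
    and timelike: "Qf (conformal_metric \<omega>) (\<gamma> 0) (v 0) < 0"
    and jac: "is_jacobi (conformal_metric \<omega>) T \<gamma> v J"
    and s: "0 \<le> s1" "s1 < s2" "s2 \<le> T" and zeros: "J s1 = 0" "J s2 = 0"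
    and t: "t \<in> {0..T}"
  shows "J t = 0"
proof -
  obtain a where a:
    "\<And>t. t \<in> {0..T} \<Longrightarrow> (\<gamma> has_vector_derivative v t) (at t within {0..T})"
    "\<And>t. t \<in> {0..T} \<Longrightarrow> (v has_vector_derivative a t) (at t within {0..T})"
    "\<And>t. t \<in> {0..T} \<Longrightarrow>
       fst (a t) = - christoffel (fst (\<gamma> t)) * (fst (v t) * fst (v t) + snd (v t) * snd (v t))"
    "\<And>t. t \<in> {0..T} \<Longrightarrow> snd (a t) = - 2 * christoffel (fst (\<gamma> t)) * fst (v t) * snd (v t)"
    using geodesic_equations[OF geo] by blast
  obtain W A where WA:
    "\<And>t. t \<in> {0..T} \<Longrightarrow> (J has_vector_derivative W t) (at t within {0..T})"
    "\<And>t. t \<in> {0..T} \<Longrightarrow> (W has_vector_derivative A t) (at t within {0..T})"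
    "\<And>t. t \<in> {0..T} \<Longrightarrow> fst (A t) =
       - christoffel' (fst (\<gamma> t)) * fst (J t) * (fst (v t) * fst (v t) + snd (v t) * snd (v t))
       - 2 * christoffel (fst (\<gamma> t)) * (fst (v t) * fst (W t) + snd (v t) * snd (W t))"
    "\<And>t. t \<in> {0..T} \<Longrightarrow> snd (A t) =
       - 2 * christoffel' (fst (\<gamma> t)) * fst (J t) * fst (v t) * snd (v t)
       - 2 * christoffel (fst (\<gamma> t)) * (fst (v t) * snd (W t) + snd (v t) * fst (W t))"
    using jacobi_equations[OF jac] by blast
  interpret ode: conformal_jacobi_ode \<omega> \<omega>' \<omega>'' T "\<lambda>t. fst (\<gamma> t)" "\<lambda>t. fst (v t)" "\<lambda>t. snd (v t)"
    "\<lambda>t. fst (a t)" "\<lambda>t. snd (a t)" "\<lambda>t. fst (J t)" "\<lambda>t. snd (J t)" "\<lambda>t. fst (W t)" "\<lambda>t. snd (W t)"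
    "\<lambda>t. fst (A t)" "\<lambda>t. snd (A t)"
    using s timelike a(3,4) WA(3,4) pos deriv1 deriv2
      has_real_derivative_fst[OF a(1)] has_real_derivative_fst[OF a(2)] has_real_derivative_snd[OF a(2)]
      has_real_derivative_fst[OF WA(1)] has_real_derivative_snd[OF WA(1)]
      has_real_derivative_fst[OF WA(2)] has_real_derivative_snd[OF WA(2)]
    by unfold_locales (simp_all add: Qf_conformal_metric)
  have "fst (J t) = 0 \<and> snd (J t) = 0"
    using ode.jacobi_field_vanishes[OF s _ _ _ _ t] zeros by simp
  then show ?thesis by (simp add: prod_eq_iff)
qed

theorem timelike_pole_conformal_metric: "timelike_pole (conformal_metric \<omega>) p"
  unfolding timelike_pole_def conjugate_pair_def
  using jacobi_field_vanishes_conformal_metric by blast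

section \<open>Causal structure\<close>

lemma causal_curve_velocity:
  assumes "fd_causal_curve (conformal_metric \<omega>) (\<lambda>_. (1, 0)) \<gamma>"
  obtains S D where "finite S" "continuous_on {0..1} \<gamma>"
    "\<And>t. t \<in> {0..1} - S \<Longrightarrow> (\<gamma> has_vector_derivative D t) (at t)"
    "\<And>t. t \<in> {0..1} - S \<Longrightarrow> \<bar>snd (D t)\<bar> \<le> fst (D t) \<and> 0 < fst (D t)"
proof -
  from assms obtain S where S: "finite S" "continuous_on {0..1} \<gamma>"
    "\<gamma> C1_differentiable_on ({0..1} - S)"
    "\<forall>t\<in>{0..1} - S. Qf (conformal_metric \<omega>) (\<gamma> t) (vector_derivative \<gamma> (at t)) \<le> 0 \<and>
        Bf (conformal_metric \<omega>) (\<gamma> t) (vector_derivative \<gamma> (at t)) (1, 0) < 0"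
    unfolding fd_causal_curve_def by blast
  from S(3) obtain D where D: "\<And>t. t \<in> {0..1} - S \<Longrightarrow> (\<gamma> has_vector_derivative D t) (at t)"
    unfolding C1_differentiable_on_def by blast
  have "\<bar>snd (D t)\<bar> \<le> fst (D t) \<and> 0 < fst (D t)" if t: "t \<in> {0..1} - S" for t
  proof -
    have "\<omega> (fst (\<gamma> t)) * (snd (D t) * snd (D t) - fst (D t) * fst (D t)) \<le> 0"
      and "\<omega> (fst (\<gamma> t)) * fst (D t) > 0"
      using S(4)[rule_format, OF t] unfolding vector_derivative_at[OF D[OF t]]
      by (auto simp: Qf_conformal_metric Bf_conformal_metric)
    then have "snd (D t) * snd (D t) \<le> fst (D t) * fst (D t)" "0 < fst (D t)"
      using pos[of "fst (\<gamma> t)"] by (simp_all add: mult_le_0_iff zero_less_mult_iff)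
    then show ?thesis by (metis abs_le_square_iff abs_of_pos power2_eq_square)
  qed
  with S(1,2) D show thesis by (rule that)
qed

lemma causal_curve_increment:
  assumes \<gamma>: "fd_causal_curve (conformal_metric \<omega>) (\<lambda>_. (1, 0)) \<gamma>"
    and ab: "0 \<le> a" "a \<le> b" "b \<le> 1"
  shows "\<bar>snd (\<gamma> b) - snd (\<gamma> a)\<bar> \<le> fst (\<gamma> b) - fst (\<gamma> a)"
proof -
  obtain S D where S: "finite S" "continuous_on {0..1} \<gamma>"
    and D: "\<And>t. t \<in> {0..1} - S \<Longrightarrow> (\<gamma> has_vector_derivative D t) (at t)"
      "\<And>t. t \<in> {0..1} - S \<Longrightarrow> \<bar>snd (D t)\<bar> \<le> fst (D t) \<and> 0 < fst (D t)"
    using causal_curve_velocity[OF \<gamma>] by metis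
  have "fst (\<gamma> a) + c * snd (\<gamma> a) \<le> fst (\<gamma> b) + c * snd (\<gamma> b)" if c: "\<bar>c\<bar> \<le> 1" for c
  proof (rule nondecreasing_if_deriv_nonneg_except_finite[OF S(1) ab(2)])
    show "continuous_on {a..b} (\<lambda>t. fst (\<gamma> t) + c * snd (\<gamma> t))"
      using continuous_on_subset[OF S(2)] ab by (auto intro!: continuous_intros)
  next
    fix t assume "t \<in> {a..b} - S"
    then have t: "t \<in> {0..1} - S" using ab by auto
    show "((\<lambda>t. fst (\<gamma> t) + c * snd (\<gamma> t)) has_real_derivative fst (D t) + c * snd (D t)) (at t)"
      using D(1)[OF t] by (intro DERIV_add DERIV_cmult has_real_derivative_fst has_real_derivative_snd)
    have "\<bar>c * snd (D t)\<bar> \<le> fst (D t)"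
      using D(2)[OF t] c mult_left_le_one_le[of "\<bar>snd (D t)\<bar>" "\<bar>c\<bar>"]
      by (simp add: abs_mult)
    then show "0 \<le> fst (D t) + c * snd (D t)" by linarith
  qed
  from this[of 1] this[of "-1"] show ?thesis by simp
qed

lemma causal_curve_fst_less:
  assumes \<gamma>: "fd_causal_curve (conformal_metric \<omega>) (\<lambda>_. (1, 0)) \<gamma>"
  shows "fst (\<gamma> 0) < fst (\<gamma> 1)"
proof -
  obtain S D where S: "finite S" "continuous_on {0..1} \<gamma>"
    and D: "\<And>t. t \<in> {0..1} - S \<Longrightarrow> (\<gamma> has_vector_derivative D t) (at t)"
      "\<And>t. t \<in> {0..1} - S \<Longrightarrow> \<bar>snd (D t)\<bar> \<le> fst (D t) \<and> 0 < fst (D t)"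
    using causal_curve_velocity[OF \<gamma>] by metis
  have "infinite ({0<..<1::real} - S)" using S(1) by (intro Diff_infinite_finite) simp_all
  then obtain t where "t \<in> {0<..<1} - S" by (metis ex_in_conv infinite_imp_nonempty)
  then have t: "0 < t" "t < 1" "t \<notin> S" by auto
  then have tS: "t \<in> {0..1} - S" by simp
  have "\<exists>d>0. \<forall>h>0. h < d \<longrightarrow> fst (\<gamma> t) < fst (\<gamma> (t + h))"
    using DERIV_pos_inc_right[OF has_real_derivative_fst[OF D(1)[OF tS]]] D(2)[OF tS] by simp
  then obtain d where d: "0 < d" "\<And>h. 0 < h \<Longrightarrow> h < d \<Longrightarrow> fst (\<gamma> t) < fst (\<gamma> (t + h))"
    by blast
  define h where "h = min d (1 - t) / 2"
  have h: "0 < h" "h < d" "t + h \<le> 1" unfolding h_def using d(1) t by (auto simp: min_def field_simps)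
  have "fst (\<gamma> 0) \<le> fst (\<gamma> t)" using causal_curve_increment[OF \<gamma>, of 0 t] t by simp
  also have "\<dots> < fst (\<gamma> (t + h))" using d(2) h by simp
  also have "\<dots> \<le> fst (\<gamma> 1)" using causal_curve_increment[OF \<gamma>, of "t + h" 1] t h by simp
  finally show ?thesis .
qed

lemma segment_causal_curve:
  assumes cone: "\<bar>snd q - snd p\<bar> \<le> fst q - fst p" and "q \<noteq> p"
  shows "fd_causal_curve (conformal_metric \<omega>) (\<lambda>_. (1, 0)) (\<lambda>t. p + t *\<^sub>R (q - p))"
proof -
  have "0 < fst q - fst p"
    using cone \<open>q \<noteq> p\<close> by (cases p, cases q) auto
  moreover have "(snd q - snd p) * (snd q - snd p) \<le> (fst q - fst p) * (fst q - fst p)"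
    using cone by (metis abs_le_square_iff abs_of_nonneg abs_ge_zero order_trans power2_eq_square)
  ultimately show ?thesis
    using \<open>q \<noteq> p\<close> unfolding fd_causal_curve_def
    by (intro conjI exI[of _ "{}"])
       (auto intro!: continuous_intros segment_C1
         simp: vector_derivative_segment Qf_conformal_metric Bf_conformal_metric pos less_imp_le[OF pos]
           mult_le_0_iff mult_less_0_iff)
qed

lemma causal_future_conformal_metric:
  "causal_future (conformal_metric \<omega>) (\<lambda>_. (1, 0)) p = {q. \<bar>snd q - snd p\<bar> \<le> fst q - fst p}"
  unfolding causal_future_def
  using causal_curve_increment[of _ 0 1] segment_causal_curve by fastforce

lemma causal_past_conformal_metric:
  "causal_past (conformal_metric \<omega>) (\<lambda>_. (1, 0)) q = {p. \<bar>snd q - snd p\<bar> \<le> fst q - fst p}"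
  unfolding causal_past_def
  using causal_curve_increment[of _ 0 1] segment_causal_curve by fastforce

lemma causal_diamond_compact:
  "compact (causal_future (conformal_metric \<omega>) (\<lambda>_. (1, 0)) p
     \<inter> causal_past (conformal_metric \<omega>) (\<lambda>_. (1, 0)) q)"
proof -
  let ?D = "{r. \<bar>snd r - snd p\<bar> \<le> fst r - fst p} \<inter> {r::pt. \<bar>snd q - snd r\<bar> \<le> fst q - fst r}"
  have "closed ?D"
    by (intro closed_Int closed_Collect_le continuous_intros)
  moreover have "?D \<subseteq> cbox (fst p, snd p - (fst q - fst p)) (fst q, snd p + (fst q - fst p))"
    by (auto simp: cbox_Pair_iff abs_le_iff)
  then have "bounded ?D" by (rule bounded_subset[OF bounded_cbox])
  ultimately show ?thesis
    by (simp add: compact_eq_bounded_closed causal_future_conformal_metric causal_past_conformal_metric)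
qed

theorem class_A_conformal_metric: "class_A (conformal_metric \<omega>)"
  unfolding class_A_def
proof (intro exI[of _ "\<lambda>_. (1, 0)"] conjI)
  show "time_orientation (conformal_metric \<omega>) (\<lambda>_. (1, 0))"
    using pos by (simp add: time_orientation_def Qf_conformal_metric)
  show "totally_vicious (conformal_metric \<omega>)"
    unfolding totally_vicious_def
  proof
    fix p :: pt
    show "\<exists>\<gamma> (m::int) (n::int). \<gamma> C1_differentiable_on {0..1} \<and>
      (\<forall>t\<in>{0..1}. Qf (conformal_metric \<omega>) (\<gamma> t) (vector_derivative \<gamma> (at t)) < 0) \<and>
      \<gamma> 0 = p \<and> \<gamma> 1 = p + (of_int m, of_int n)"
      by (rule exI[of _ "\<lambda>t. p + t *\<^sub>R (1, 0)"], rule exI[of _ 1], rule exI[of _ 0],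
          intro conjI ballI segment_C1; (unfold vector_derivative_segment)?;
          simp add: pos Qf_conformal_metric zero_prod_def)
  qed
  show "globally_hyperbolic (conformal_metric \<omega>) (\<lambda>_. (1, 0))"
    unfolding globally_hyperbolic_def
    using causal_curve_fst_less causal_diamond_compact by (metis less_irrefl)
qed

end

section \<open>The example \<open>\<omega>(x) = 2 + sin 2\<pi>x\<close>\<close>

definition sine_factor :: "real \<Rightarrow> real" where
  "sine_factor s = 2 + sin (2 * pi * s)"

interpretation sine: conformal_factor sine_factor
  "\<lambda>s. 2 * pi * cos (2 * pi * s)" "\<lambda>s. - (4 * pi\<^sup>2) * sin (2 * pi * s)"
proof
  fix s :: real
  show "0 < sine_factor s"
    unfolding sine_factor_def using sin_ge_minus_one[of "2 * pi * s"] by linarith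
  show "(sine_factor has_real_derivative 2 * pi * cos (2 * pi * s)) (at s)"
    unfolding sine_factor_def[abs_def] by (auto intro!: derivative_eq_intros)
  show "((\<lambda>s. 2 * pi * cos (2 * pi * s)) has_real_derivative - (4 * pi\<^sup>2) * sin (2 * pi * s)) (at s)"
    by (auto intro!: derivative_eq_intros simp: power2_eq_square)
qed

lemma sine_factor_periodic: "sine_factor (s + of_int m) = sine_factor s"
proof -
  have "sin (2 * pi * (s + of_int m)) = sin (2 * pi * s + pi * of_int (2 * m))"
    by (simp add: algebra_simps)
  also have "\<dots> = sin (2 * pi * s)"
    by (simp only: sin_add sin_npi_int cos_npi_int) simp
  finally show ?thesis by (simp add: sine_factor_def)
qed

definition first_harmonics :: "(pt \<Rightarrow> real) set" where
  "first_harmonics = {f. \<exists>a b c. f = (\<lambda>p. a + b * sin (2 * pi * fst p) + c * cos (2 * pi * fst p))}"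

lemma smooth2_first_harmonics: "f \<in> first_harmonics \<Longrightarrow> smooth2 f"
proof (coinduction arbitrary: f rule: smooth2.coinduct)
  case (smooth2 f)
  then obtain a b c where f: "f = (\<lambda>p. a + b * sin (2 * pi * fst p) + c * cos (2 * pi * fst p))"
    unfolding first_harmonics_def by blast
  define fx where "fx = (\<lambda>p::pt. 0 + (- (2 * pi * c)) * sin (2 * pi * fst p) + (2 * pi * b) * cos (2 * pi * fst p))"
  have "\<forall>p. (f has_derivative (\<lambda>h. fx p * fst h + 0 * snd h)) (at p)"
    unfolding f fx_def by (auto intro!: derivative_eq_intros ext simp: algebra_simps)
  moreover have "fx \<in> first_harmonics"
    unfolding first_harmonics_def fx_def by fastforce
  moreover have "(\<lambda>_. 0) \<in> first_harmonics"
    unfolding first_harmonics_def by (intro CollectI exI[of _ 0]) simp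
  ultimately show ?case
    by (intro exI[of _ f] exI[of _ fx] exI[of _ "\<lambda>_. 0"]) auto
qed

lemma torus_lorentz_metric_sine: "torus_lorentz_metric (conformal_metric sine_factor)"
  unfolding torus_lorentz_metric_def
proof (intro conjI allI impI)
  fix i j :: nat
  define \<sigma> :: real where "\<sigma> = (if i = 0 \<and> j = 0 then - 1 else if i = 1 \<and> j = 1 then 1 else 0)"
  have "(\<lambda>p. conformal_metric sine_factor p i j)
      = (\<lambda>p. 2 * \<sigma> + \<sigma> * sin (2 * pi * fst p) + 0 * cos (2 * pi * fst p))"
    by (auto simp: conformal_metric_def sine_factor_def \<sigma>_def)
  then have "(\<lambda>p. conformal_metric sine_factor p i j) \<in> first_harmonics"
    unfolding first_harmonics_def by blast
  then show "smooth2 (\<lambda>p. conformal_metric sine_factor p i j)"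
    by (rule smooth2_first_harmonics)
qed (auto simp: conformal_metric_def gdet_conformal_metric sine.pos sine_factor_periodic)

lemma not_flat_sine: "\<not> flat (conformal_metric sine_factor)"
  by (rule sine.not_flat_conformal_metric[of 0], unfold sine.christoffel'_def) (simp add: sine_factor_def)

lemma cell_lebesgue_measurable: "cell \<in> sets lebesgue"
proof -
  have "cell = {x::pt. 0 \<le> fst x} \<inter> {x. 0 \<le> snd x} \<inter> ({x. fst x < 1} \<inter> {x. snd x < 1})"
    by (auto simp: cell_def)
  also have "\<dots> \<in> sets borel"
    by (intro sets.Int borel_closed borel_open closed_Int open_Int closed_Collect_le
        open_Collect_less continuous_intros)
  finally show ?thesis by simp
qed

theorem theorem1p2:
  fixes \<epsilon> :: real
  assumes "0 < \<epsilon>" and "\<epsilon> < 1"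
  shows "\<exists>g. torus_lorentz_metric g \<and> class_A g \<and> \<not> flat g \<and>
           {p \<in> cell. timelike_pole g p} \<in> sets lebesgue \<and>
           ennreal (1 - \<epsilon>) * vol g cell \<le> vol g {p \<in> cell. timelike_pole g p} \<and>
           vol g {p \<in> cell. timelike_pole g p} \<le> vol g cell"
proof (intro exI[of _ "conformal_metric sine_factor"] conjI)
  have poles: "{p \<in> cell. timelike_pole (conformal_metric sine_factor) p} = cell"
    using sine.timelike_pole_conformal_metric by simp
  show "torus_lorentz_metric (conformal_metric sine_factor)" by (rule torus_lorentz_metric_sine)
  show "class_A (conformal_metric sine_factor)" by (rule sine.class_A_conformal_metric)
  show "\<not> flat (conformal_metric sine_factor)" by (rule not_flat_sine)
  show "{p \<in> cell. timelike_pole (conformal_metric sine_factor) p} \<in> sets lebesgue"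
    unfolding poles by (rule cell_lebesgue_measurable)
  have "ennreal (1 - \<epsilon>) * vol (conformal_metric sine_factor) cell \<le> vol (conformal_metric sine_factor) cell"
    using assms mult_right_mono[of "ennreal (1 - \<epsilon>)" 1] by (simp add: ennreal_le_1)
  then show "ennreal (1 - \<epsilon>) * vol (conformal_metric sine_factor) cell
      \<le> vol (conformal_metric sine_factor) {p \<in> cell. timelike_pole (conformal_metric sine_factor) p}"
    unfolding poles .
  show "vol (conformal_metric sine_factor) {p \<in> cell. timelike_pole (conformal_metric sine_factor) p}
      \<le> vol (conformal_metric sine_factor) cell"
    unfolding poles ..
qed

end
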